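(* For any signed graph $(G,\sigma)$, $\chi_c(G,\sigma)\le 2\chi_c(G)$, where $\chi_c(G)$ is the circular chromatic number of the underlying unsigned graph $G$.
   Context: A signed graph $(G,\sigma)$ is a finite graph $G$ (multiple edges allowed, no loops) with a signature $\sigma:E(G)\to\{+1,-1\}$. For real $r\ge 2$, $C^r$ is the circle of circumference $r$, $d_{C^r}(x,y)=\min\{|x-y|,r-|x-y|\}$, $\overline{x}=x+r/2\pmod r$. A circular $r$-coloring of $(G,\sigma)$ is $f:V(G)\to C^r$ with $d_{C^r}(f(u),f(v))\ge1$ for each positive edge $uv$ and $d_{C^r}(f(u),\overline{f(v)})\ge1$ for each negative edge $uv$; $\chi_c(G,\sigma)$ is the infimum of such $r\ge2$. For an unsigned graph $G$, a circular $r$-coloring requires $d_{C^r}(f(u),f(v))\ge1$ for every edge $uv$, and $\chi_c(G)$ is the infimum of such $r$. *)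

theory Defs
  imports Complex_Main
begin

text \<open>A signed multigraph: finite vertex set V, finite set of edge identifiers E,
  each edge e has endpoints ends e = (u,v) in V with u \<noteq> v (no loops; parallel
  edges allowed since distinct edge identifiers may have the same endpoints),
  and signature sigma e \<in> {1,-1}.\<close>

definition signed_graph ::
  "'v set \<Rightarrow> 'e set \<Rightarrow> ('e \<Rightarrow> 'v \<times> 'v) \<Rightarrow> ('e \<Rightarrow> int) \<Rightarrow> bool" where
  "signed_graph V E ends sigma \<longleftrightarrow> finite V \<and> finite E \<and>
     (\<forall>e\<in>E. fst (ends e) \<in> V \<and> snd (ends e) \<in> V \<and> fst (ends e) \<noteq> snd (ends e)) \<and>
     (\<forall>e\<in>E. sigma e = 1 \<or> sigma e = -1)"

text \<open>The circle C^r is represented by the interval [0,r).\<close>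

definition circ_dist :: "real \<Rightarrow> real \<Rightarrow> real \<Rightarrow> real" where
  "circ_dist r x y = min \<bar>x - y\<bar> (r - \<bar>x - y\<bar>)"

definition antipode :: "real \<Rightarrow> real \<Rightarrow> real" where
  "antipode r x = (if x + r / 2 < r then x + r / 2 else x + r / 2 - r)"

definition signed_circ_coloring ::
  "real \<Rightarrow> 'v set \<Rightarrow> 'e set \<Rightarrow> ('e \<Rightarrow> 'v \<times> 'v) \<Rightarrow> ('e \<Rightarrow> int) \<Rightarrow> ('v \<Rightarrow> real) \<Rightarrow> bool" where
  "signed_circ_coloring r V E ends sigma f \<longleftrightarrow>
     (\<forall>v\<in>V. 0 \<le> f v \<and> f v < r) \<and>
     (\<forall>e\<in>E. (sigma e = 1 \<longrightarrow> circ_dist r (f (fst (ends e))) (f (snd (ends e))) \<ge> 1) \<and>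
             (sigma e = -1 \<longrightarrow> circ_dist r (f (fst (ends e))) (antipode r (f (snd (ends e)))) \<ge> 1))"

definition signed_chi_c ::
  "'v set \<Rightarrow> 'e set \<Rightarrow> ('e \<Rightarrow> 'v \<times> 'v) \<Rightarrow> ('e \<Rightarrow> int) \<Rightarrow> real" where
  "signed_chi_c V E ends sigma =
     Inf {r. r \<ge> 2 \<and> (\<exists>f. signed_circ_coloring r V E ends sigma f)}"

definition circ_coloring ::
  "real \<Rightarrow> 'v set \<Rightarrow> 'e set \<Rightarrow> ('e \<Rightarrow> 'v \<times> 'v) \<Rightarrow> ('v \<Rightarrow> real) \<Rightarrow> bool" where
  "circ_coloring r V E ends f \<longleftrightarrow>
     (\<forall>v\<in>V. 0 \<le> f v \<and> f v < r) \<and>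
     (\<forall>e\<in>E. circ_dist r (f (fst (ends e))) (f (snd (ends e))) \<ge> 1)"

definition chi_c :: "'v set \<Rightarrow> 'e set \<Rightarrow> ('e \<Rightarrow> 'v \<times> 'v) \<Rightarrow> real" where
  "chi_c V E ends = Inf {r. r \<ge> 2 \<and> (\<exists>f. circ_coloring r V E ends f)}"

end

theory Submission
  imports Defs
begin

text \<open>Place a circular \<open>r\<close>-colouring \<open>f\<close> of \<open>G\<close> unchanged on the circle of circumference
  \<open>2 r\<close>: all colours lie in a half circle, so for colours \<open>a, b\<close> the distance from \<open>a\<close> to \<open>b\<close> is
  \<open>\<bar>a - b\<bar>\<close> and the distance from \<open>a\<close> to the antipode \<open>b + r\<close> of \<open>b\<close> is \<open>r - \<bar>a - b\<bar>\<close>.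
  Their minimum is the distance of \<open>a\<close> and \<open>b\<close> on \<open>C\<^sup>r\<close>, so \<open>f\<close> is a circular \<open>2 r\<close>-colouring
  of \<open>(G, \<sigma>)\<close> for every signature \<open>\<sigma>\<close>.\<close>

lemma antipode_double:
  assumes "0 \<le> b" "b < r"
  shows "antipode (2 * r) b = b + r"
  using assms unfolding antipode_def by auto

lemma circ_dist_eq_min_double:
  assumes "0 \<le> a" "a < r" "0 \<le> b" "b < r"
  shows "circ_dist r a b = min (circ_dist (2 * r) a b) (circ_dist (2 * r) a (antipode (2 * r) b))"
proof -
  have "circ_dist (2 * r) a b = \<bar>a - b\<bar>"
    using assms unfolding circ_dist_def by auto
  moreover have "circ_dist (2 * r) a (b + r) = r - \<bar>a - b\<bar>"
    using assms unfolding circ_dist_def by (auto simp: abs_if)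
  ultimately show ?thesis
    using assms by (simp add: antipode_double circ_dist_def)
qed

lemma signed_circ_coloring_double:
  assumes "signed_graph V E ends sigma" "circ_coloring r V E ends f"
  shows "signed_circ_coloring (2 * r) V E ends sigma f"
  unfolding signed_circ_coloring_def
proof (intro conjI ballI impI)
  fix v assume "v \<in> V"
  then show "0 \<le> f v" "f v < 2 * r"
    using assms(2) unfolding circ_coloring_def by auto
next
  fix e assume e: "e \<in> E"
  let ?a = "f (fst (ends e))" and ?b = "f (snd (ends e))"
  have "fst (ends e) \<in> V" "snd (ends e) \<in> V"
    using assms(1) e unfolding signed_graph_def by auto
  then have range: "0 \<le> ?a" "?a < r" "0 \<le> ?b" "?b < r"
    using assms(2) unfolding circ_coloring_def by auto
  have "1 \<le> circ_dist r ?a ?b"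
    using assms(2) e unfolding circ_coloring_def by auto
  then show "1 \<le> circ_dist (2 * r) ?a ?b" "1 \<le> circ_dist (2 * r) ?a (antipode (2 * r) ?b)"
    unfolding circ_dist_eq_min_double[OF range] by auto
qed

lemma circ_coloring_injective:
  assumes "signed_graph V E ends sigma" "inj_on h V" "h ` V \<subseteq> {..<n}" "real n \<le> r"
  shows "circ_coloring r V E ends (\<lambda>v. real (h v))"
  unfolding circ_coloring_def
proof (intro conjI ballI)
  fix v assume "v \<in> V"
  then show "0 \<le> real (h v)" "real (h v) < r"
    using assms(3,4) by force+
next
  fix e assume e: "e \<in> E"
  let ?u = "fst (ends e)" and ?w = "snd (ends e)"
  have "?u \<in> V" "?w \<in> V" "?u \<noteq> ?w"
    using assms(1) e unfolding signed_graph_def by auto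
  then have "h ?u \<noteq> h ?w" "h ?u < n" "h ?w < n"
    using assms(2,3) by (auto dest: inj_onD)
  then show "1 \<le> circ_dist r (real (h ?u)) (real (h ?w))"
    using assms(4) unfolding circ_dist_def by auto
qed

lemma circ_coloring_exists:
  assumes "signed_graph V E ends sigma"
  shows "\<exists>r f. 2 \<le> r \<and> circ_coloring r V E ends f"
proof -
  obtain h where h: "bij_betw h V {0..<card V}"
    using assms ex_bij_betw_finite_nat unfolding signed_graph_def by blast
  then have "circ_coloring (real (card V) + 2) V E ends (\<lambda>v. real (h v))"
    using circ_coloring_injective[OF assms, of h "card V"]
    by (auto simp: bij_betw_def lessThan_atLeast0)
  moreover have "2 \<le> real (card V) + 2" by simp
  ultimately show ?thesis by blast
qed

lemma cInf_le_mult_cInf: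
  fixes S T :: "real set" and c :: real
  assumes "c > 0" "S \<noteq> {}" "bdd_below T" "\<And>x. x \<in> S \<Longrightarrow> c * x \<in> T"
  shows "Inf T \<le> c * Inf S"
proof -
  have "Inf T / c \<le> Inf S"
  proof (rule cInf_greatest[OF assms(2)])
    fix x assume "x \<in> S"
    then have "Inf T \<le> c * x"
      using assms(3,4) by (simp add: cInf_lower)
    then show "Inf T / c \<le> x"
      using assms(1) by (simp add: field_simps)
  qed
  then show ?thesis
    using assms(1) by (simp add: field_simps)
qed

theorem lemma5:
  fixes V :: "'v set" and E :: "'e set" and ends :: "'e \<Rightarrow> 'v \<times> 'v" and sigma :: "'e \<Rightarrow> int"
  assumes "signed_graph V E ends sigma"
  shows "signed_chi_c V E ends sigma \<le> 2 * chi_c V E ends"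
  unfolding signed_chi_c_def chi_c_def
proof (rule cInf_le_mult_cInf)
  show "{r. 2 \<le> r \<and> (\<exists>f. circ_coloring r V E ends f)} \<noteq> {}"
    using circ_coloring_exists[OF assms] by blast
  show "bdd_below {r. 2 \<le> r \<and> (\<exists>f. signed_circ_coloring r V E ends sigma f)}"
    by (rule bdd_belowI[of _ 2]) auto
  fix r assume "r \<in> {r. 2 \<le> r \<and> (\<exists>f. circ_coloring r V E ends f)}"
  then show "2 * r \<in> {r. 2 \<le> r \<and> (\<exists>f. signed_circ_coloring r V E ends sigma f)}"
    using signed_circ_coloring_double[OF assms] by auto
qed simp

end
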